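(* Let $\widetilde C,\widetilde C',\widetilde C''$ be $r$-perfect $\mathcal S$-complexes, and let $\widetilde\lambda:\widetilde C\to\widetilde C'$ and $\widetilde\lambda':\widetilde C'\to\widetilde C''$ be height $n$ and height $m$ morphisms respectively ($n,m\ge0$). Then $\widetilde\lambda'\widetilde\lambda$ is a height $n+m$ morphism. If moreover $\widetilde\lambda$ is strong height $n$ and $\widetilde\lambda'$ is strong height $m$, then $\widetilde\lambda'\widetilde\lambda$ is strong height $n+m$.
   Context: Let $R$ be a commutative ring; graded modules are $\mathbb Z$-graded, $V[i]_j=V_{i+j}$, differentials have degree $-1$. An $\mathcal S$-complex over $R$ is a chain complex $(\widetilde C,\widetilde d)$ of finitely generated free graded $R$-modules with a graded decomposition $\widetilde C=C\oplus C[-1]\oplus\mathsf R$ in which $\widetilde d=\begin{pmatrix} d&0&0\\ v&-d&\delta_2\\ \delta_1&0&r\end{pmatrix}$; it is $r$-perfect if $\mathsf R$ is supported in even degrees (so $r=0$). A degree $k$ morphism is an $R$-linear map of degree $k$ of the form $\begin{pmatrix}\lambda&0&0\\ \mu&\lambda&\Delta_2\\ \Delta_1&0&\rho\end{pmatrix}$ with $\widetilde d'\widetilde\lambda=\widetilde\lambda\widetilde d$; composition is composition of maps. For such a morphism between $r$-perfect complexes set $\tau_0=\rho$ and for $i\ge0$, $\tau_{i+1}=\delta_1'v'^i\Delta_2+\Delta_1v^i\delta_2+\sum_{j=0}^{i-1}\delta_1'v'^j\mu v^{i-1-j}\delta_2$. A height $n$ morphism ($n\ge0$) is an even degree morphism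 between $r$-perfect $\mathcal S$-complexes with $\tau_j=0$ for all $0\le j<n$; it is strong height $n$ if in addition $\tau_n$ is an isomorphism. *)

theory Defs
  imports "Jordan_Normal_Form.Matrix"
begin

text \<open>The ground ring is a commutative ring with unit ('a :: comm_ring_1),
concentrated in degree 0.  A finitely generated free graded module is a finite direct sum
of shifted copies of the ring; it is encoded by the list of degrees of a homogeneous basis.
An R-linear map of degree k between such modules is a matrix (rows = target basis,
columns = source basis) whose (i,j) entry vanishes unless deg target_i = deg source_j + k.\<close>

definition graded_map :: "int \<Rightarrow> int list \<Rightarrow> int list \<Rightarrow> 'a :: zero mat \<Rightarrow> bool" where
  "graded_map k ds dt M \<longleftrightarrow> M \<in> carrier_mat (length dt) (length ds) \<and>
     (\<forall>i < length dt. \<forall>j < length ds. M $$ (i, j) \<noteq> 0 \<longrightarrow> dt ! i = ds ! j + k)"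

definition blk :: "'a mat \<Rightarrow> nat \<Rightarrow> nat \<Rightarrow> nat \<Rightarrow> nat \<Rightarrow> 'a mat" where
  "blk M r0 nr c0 nc = mat nr nc (\<lambda>(i, j). M $$ (r0 + i, c0 + j))"

text \<open>An S-complex is given by (degrees of a basis of C, degrees of a basis of R, differential
of the total module  C \<oplus> C[-1] \<oplus> R).  Since C[-1]_j = C_(j-1), a basis element of C of degree d
sits in degree d+1 in C[-1].  The total basis is ordered: C, then C[-1], then R.\<close>
type_synonym 'a scx = "int list \<times> int list \<times> 'a mat"

definition cdeg :: "'a scx \<Rightarrow> int list" where "cdeg X = fst X"
definition rdeg :: "'a scx \<Rightarrow> int list" where "rdeg X = fst (snd X)"
definition dif :: "'a scx \<Rightarrow> 'a mat" where "dif X = snd (snd X)"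

definition nC :: "'a scx \<Rightarrow> nat" where "nC X = length (cdeg X)"
definition nR :: "'a scx \<Rightarrow> nat" where "nR X = length (rdeg X)"

definition totdeg :: "'a scx \<Rightarrow> int list" where
  "totdeg X = cdeg X @ map (\<lambda>d. d + 1) (cdeg X) @ rdeg X"

text \<open>Blocks (row block, column block) with indices 0 = C, 1 = C[-1], 2 = R.\<close>
definition bsize :: "'a scx \<Rightarrow> nat \<Rightarrow> nat" where
  "bsize X b = (if b = 2 then nR X else nC X)"
definition boff :: "'a scx \<Rightarrow> nat \<Rightarrow> nat" where
  "boff X b = (if b = 0 then 0 else if b = 1 then nC X else 2 * nC X)"

definition mblk :: "'a scx \<Rightarrow> 'a scx \<Rightarrow> 'a mat \<Rightarrow> nat \<Rightarrow> nat \<Rightarrow> 'a mat" where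
  "mblk Y X M a b = blk M (boff Y a) (bsize Y a) (boff X b) (bsize X b)"

definition d_of :: "'a scx \<Rightarrow> 'a mat" where "d_of X = mblk X X (dif X) 0 0"
definition v_of :: "'a scx \<Rightarrow> 'a mat" where "v_of X = mblk X X (dif X) 1 0"
definition delta2_of :: "'a scx \<Rightarrow> 'a mat" where "delta2_of X = mblk X X (dif X) 1 2"
definition delta1_of :: "'a scx \<Rightarrow> 'a mat" where "delta1_of X = mblk X X (dif X) 2 0"

definition S_complex :: "'a :: comm_ring_1 scx \<Rightarrow> bool" where
  "S_complex X \<longleftrightarrow>
     graded_map (-1) (totdeg X) (totdeg X) (dif X) \<and>
     dif X * dif X = 0\<^sub>m (length (totdeg X)) (length (totdeg X)) \<and>
     mblk X X (dif X) 0 1 = 0\<^sub>m (nC X) (nC X) \<and>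
     mblk X X (dif X) 0 2 = 0\<^sub>m (nC X) (nR X) \<and>
     mblk X X (dif X) 2 1 = 0\<^sub>m (nR X) (nC X) \<and>
     mblk X X (dif X) 1 1 = - d_of X"

definition r_perfect :: "'a :: comm_ring_1 scx \<Rightarrow> bool" where
  "r_perfect X \<longleftrightarrow> S_complex X \<and> (\<forall>e \<in> set (rdeg X). even e)"

text \<open>A degree k morphism X \<rightarrow> Y: a degree k map of the total modules of the block form
(lambda,0,0; mu,lambda,Delta_2; Delta_1,0,rho) commuting with the differentials.\<close>
definition S_morphism :: "int \<Rightarrow> 'a :: comm_ring_1 scx \<Rightarrow> 'a scx \<Rightarrow> 'a mat \<Rightarrow> bool" where
  "S_morphism k X Y L \<longleftrightarrow>
     S_complex X \<and> S_complex Y \<and>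
     graded_map k (totdeg X) (totdeg Y) L \<and>
     dif Y * L = L * dif X \<and>
     mblk Y X L 0 1 = 0\<^sub>m (nC Y) (nC X) \<and>
     mblk Y X L 0 2 = 0\<^sub>m (nC Y) (nR X) \<and>
     mblk Y X L 2 1 = 0\<^sub>m (nR Y) (nC X) \<and>
     mblk Y X L 1 1 = mblk Y X L 0 0"

definition mu_of :: "'a scx \<Rightarrow> 'a scx \<Rightarrow> 'a mat \<Rightarrow> 'a mat" where "mu_of X Y L = mblk Y X L 1 0"
definition Delta2_of :: "'a scx \<Rightarrow> 'a scx \<Rightarrow> 'a mat \<Rightarrow> 'a mat" where "Delta2_of X Y L = mblk Y X L 1 2"
definition Delta1_of :: "'a scx \<Rightarrow> 'a scx \<Rightarrow> 'a mat \<Rightarrow> 'a mat" where "Delta1_of X Y L = mblk Y X L 2 0"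
definition rho_of :: "'a scx \<Rightarrow> 'a scx \<Rightarrow> 'a mat \<Rightarrow> 'a mat" where "rho_of X Y L = mblk Y X L 2 2"

fun tau :: "nat \<Rightarrow> 'a :: comm_ring_1 scx \<Rightarrow> 'a scx \<Rightarrow> 'a mat \<Rightarrow> 'a mat" where
  "tau 0 X Y L = rho_of X Y L"
| "tau (Suc i) X Y L =
     delta1_of Y * (v_of Y ^\<^sub>m i) * Delta2_of X Y L
     + Delta1_of X Y L * (v_of X ^\<^sub>m i) * delta2_of X
     + mat (nR Y) (nR X) (\<lambda>(a, b). \<Sum>j < i.
          (delta1_of Y * (v_of Y ^\<^sub>m j) * mu_of X Y L * (v_of X ^\<^sub>m (i - 1 - j)) * delta2_of X) $$ (a, b))"

definition iso_mat :: "'a :: comm_ring_1 mat \<Rightarrow> bool" where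
  "iso_mat A \<longleftrightarrow> (\<exists>B \<in> carrier_mat (dim_col A) (dim_row A).
       A * B = 1\<^sub>m (dim_row A) \<and> B * A = 1\<^sub>m (dim_col A))"

definition height_mor :: "nat \<Rightarrow> 'a :: comm_ring_1 scx \<Rightarrow> 'a scx \<Rightarrow> 'a mat \<Rightarrow> bool" where
  "height_mor n X Y L \<longleftrightarrow> r_perfect X \<and> r_perfect Y \<and>
     (\<exists>k. even k \<and> S_morphism k X Y L) \<and>
     (\<forall>j < n. tau j X Y L = 0\<^sub>m (nR Y) (nR X))"

definition strong_height_mor :: "nat \<Rightarrow> 'a :: comm_ring_1 scx \<Rightarrow> 'a scx \<Rightarrow> 'a mat \<Rightarrow> bool" where
  "strong_height_mor n X Y L \<longleftrightarrow> height_mor n X Y L \<and> iso_mat (tau n X Y L)"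

end

theory Submission
  imports Defs
begin

text \<open>For a morphism \<open>lam\<close> put \<open>\<sigma> k = \<Delta>1 v^k + (\<Sum>j<k. \<delta>1' v'^j \<mu> v^(k-1-j))\<close>, so that
\<open>\<tau> (k+1) = \<delta>1' v'^k \<Delta>2 + \<sigma> k \<delta>2\<close>. Reading the chain map equation \<open>d' lam = lam d\<close> block by
block gives the twisted chain map identity \<open>\<delta>1' v'^i lam = \<sigma> i d + (\<Sum>j\<le>i. \<tau> j \<delta>1 v^(i-j))\<close>;
r-perfectness enters through \<open>r = 0\<close> and \<open>\<delta>1 v^i \<delta>2 = 0\<close>, a map of odd degree between modules
concentrated in even degrees. Substituting the identity into the blocks of a composite yields, by
induction on \<open>k\<close>, the convolution formula \<open>\<tau>\<^sub>k(lam' lam) = (\<Sum>i+j=k. \<tau>\<^sub>i(lam') \<tau>\<^sub>j(lam))\<close>.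
If \<open>\<tau>\<^sub>j(lam)\<close> vanishes for \<open>j < n\<close> and \<open>\<tau>\<^sub>i(lam')\<close> for \<open>i < m\<close>, every term with \<open>k < n + m\<close>
vanishes, and for \<open>k = n + m\<close> only \<open>\<tau>\<^sub>m(lam') \<tau>\<^sub>n(lam)\<close> survives, a composite of isomorphisms in
the strong case.\<close>

section \<open>Matrix algebra with explicit dimensions\<close>

lemma assoc_mult_mat_dim:
  "dim_col A = dim_row B \<Longrightarrow> dim_col B = dim_row C \<Longrightarrow> A * B * C = A * (B * C)"
  by (rule assoc_mult_mat[of A "dim_row A" "dim_col A" B "dim_col B" C "dim_col C"]) auto

lemma mult_add_distrib_mat_dim:
  "dim_col A = dim_row B \<Longrightarrow> dim_row C = dim_row B \<Longrightarrow> dim_col C = dim_col B \<Longrightarrow>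
   A * (B + C) = A * B + A * C"
  by (rule mult_add_distrib_mat[of A "dim_row A" "dim_col A" B "dim_col B"]) auto

lemma add_mult_distrib_mat_dim:
  "dim_row A = dim_row B \<Longrightarrow> dim_col A = dim_col B \<Longrightarrow> dim_col A = dim_row C \<Longrightarrow>
   (A + B) * C = A * C + B * C"
  by (rule add_mult_distrib_mat[of A "dim_row A" "dim_col A" B C "dim_col C"]) auto

lemma assoc_add_mat_dim:
  "dim_row A = dim_row B \<Longrightarrow> dim_col A = dim_col B \<Longrightarrow> dim_row B = dim_row C \<Longrightarrow>
   dim_col B = dim_col C \<Longrightarrow> A + B + C = A + (B + (C :: 'a :: semigroup_add mat))"
  by (intro eq_matI) (auto simp: add.assoc)

lemma comm_add_mat_dim:
  "dim_row A = dim_row B \<Longrightarrow> dim_col A = dim_col B \<Longrightarrow> A + B = B + (A :: 'a :: comm_monoid_add mat)"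
  by (intro eq_matI) (auto simp: add.commute)

lemma left_commute_add_mat_dim:
  "dim_row A = dim_row B \<Longrightarrow> dim_col A = dim_col B \<Longrightarrow> dim_row B = dim_row C \<Longrightarrow>
   dim_col B = dim_col C \<Longrightarrow> A + (B + C) = B + (A + (C :: 'a :: comm_monoid_add mat))"
  by (intro eq_matI) (auto simp: add.left_commute)

lemmas add_mat_ac_dim = assoc_add_mat_dim comm_add_mat_dim left_commute_add_mat_dim

lemma left_add_zero_mat_dim:
  "dim_row A = nr \<Longrightarrow> dim_col A = nc \<Longrightarrow> 0\<^sub>m nr nc + A = (A :: 'a :: monoid_add mat)"
  by (intro eq_matI) auto

lemma right_add_zero_mat_dim:
  "dim_row A = nr \<Longrightarrow> dim_col A = nc \<Longrightarrow> A + 0\<^sub>m nr nc = (A :: 'a :: monoid_add mat)"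
  by (intro eq_matI) auto

lemma pow_mat_Suc_left: "dim_row A = dim_col A \<Longrightarrow> A ^\<^sub>m Suc k = A * A ^\<^sub>m k"
proof (induct k)
  case (Suc k)
  have "A ^\<^sub>m Suc (Suc k) = A * A ^\<^sub>m k * A" using Suc by simp
  also have "\<dots> = A * (A ^\<^sub>m k * A)" using Suc by (subst assoc_mult_mat_dim) auto
  finally show ?case by simp
qed simp

definition finsum_mat :: "nat \<Rightarrow> nat \<Rightarrow> ('b \<Rightarrow> 'a :: comm_monoid_add mat) \<Rightarrow> 'b set \<Rightarrow> 'a mat" where
  "finsum_mat nr nc f A = mat nr nc (\<lambda>(i, j). \<Sum>x\<in>A. f x $$ (i, j))"

lemma finsum_mat_dim[simp]:
  "dim_row (finsum_mat nr nc f A) = nr" "dim_col (finsum_mat nr nc f A) = nc"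
  by (auto simp: finsum_mat_def)

lemma finsum_mat_mult_right:
  assumes f: "\<And>x. x \<in> A \<Longrightarrow> f x \<in> carrier_mat nr m" and B: "B \<in> carrier_mat m nc"
  shows "finsum_mat nr m f A * B = finsum_mat nr nc (\<lambda>x. f x * B) A"
proof (rule eq_matI)
  fix i j assume "i < dim_row (finsum_mat nr nc (\<lambda>x. f x * B) A)"
    and "j < dim_col (finsum_mat nr nc (\<lambda>x. f x * B) A)"
  then have i: "i < nr" and j: "j < nc" by auto
  have "(finsum_mat nr m f A * B) $$ (i, j) = (\<Sum>l<m. (\<Sum>x\<in>A. f x $$ (i, l)) * B $$ (l, j))"
    using i j B by (simp add: finsum_mat_def scalar_prod_def atLeast0LessThan)
  also have "\<dots> = (\<Sum>x\<in>A. \<Sum>l<m. f x $$ (i, l) * B $$ (l, j))"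
    by (simp add: sum_distrib_right sum.swap[of _ A])
  also have "\<dots> = (\<Sum>x\<in>A. (f x * B) $$ (i, j))"
  proof (rule sum.cong)
    fix x assume "x \<in> A"
    with f have "f x \<in> carrier_mat nr m" by blast
    with i j B show "(\<Sum>l<m. f x $$ (i, l) * B $$ (l, j)) = (f x * B) $$ (i, j)"
      by (simp add: scalar_prod_def atLeast0LessThan)
  qed simp
  finally show "(finsum_mat nr m f A * B) $$ (i, j) = finsum_mat nr nc (\<lambda>x. f x * B) A $$ (i, j)"
    using i j by (simp add: finsum_mat_def)
qed (use B in auto)

lemma finsum_mat_add:
  assumes "\<And>x. x \<in> A \<Longrightarrow> f x \<in> carrier_mat nr nc" "\<And>x. x \<in> A \<Longrightarrow> g x \<in> carrier_mat nr nc"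
  shows "finsum_mat nr nc (\<lambda>x. f x + g x) A = finsum_mat nr nc f A + finsum_mat nr nc g A"
proof (rule eq_matI)
  fix i j assume "i < dim_row (finsum_mat nr nc f A + finsum_mat nr nc g A)"
    and "j < dim_col (finsum_mat nr nc f A + finsum_mat nr nc g A)"
  then have ij: "i < nr" "j < nc" by auto
  have "(f x + g x) $$ (i, j) = f x $$ (i, j) + g x $$ (i, j)" if "x \<in> A" for x
    using assms[OF that] ij by simp
  then show "finsum_mat nr nc (\<lambda>x. f x + g x) A $$ (i, j)
      = (finsum_mat nr nc f A + finsum_mat nr nc g A) $$ (i, j)"
    using ij by (simp add: finsum_mat_def sum.distrib)
qed auto

lemma finsum_mat_insert:
  "finite A \<Longrightarrow> x \<notin> A \<Longrightarrow> f x \<in> carrier_mat nr nc \<Longrightarrow>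
   finsum_mat nr nc f (insert x A) = f x + finsum_mat nr nc f A"
  by (intro eq_matI) (auto simp: finsum_mat_def)

lemma finsum_mat_cong:
  "(\<And>x. x \<in> A \<Longrightarrow> f x = g x) \<Longrightarrow> finsum_mat nr nc f A = finsum_mat nr nc g A"
  unfolding finsum_mat_def by (intro eq_matI) auto

lemma finsum_mat_zero:
  "(\<And>x. x \<in> A \<Longrightarrow> f x = 0\<^sub>m nr nc) \<Longrightarrow> finsum_mat nr nc f A = 0\<^sub>m nr nc"
  unfolding finsum_mat_def by (intro eq_matI) auto

lemma finsum_mat_empty[simp]: "finsum_mat nr nc f {} = 0\<^sub>m nr nc"
  by (rule finsum_mat_zero) simp

lemma finsum_mat_single:
  assumes "finite A" "y \<in> A" "\<And>x. x \<in> A \<Longrightarrow> x \<noteq> y \<Longrightarrow> f x = 0\<^sub>m nr nc"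
    and "f y \<in> carrier_mat nr nc"
  shows "finsum_mat nr nc f A = f y"
proof (rule eq_matI)
  fix i j assume "i < dim_row (f y)" "j < dim_col (f y)"
  then have ij: "i < nr" "j < nc" using assms(4) by auto
  have "(\<Sum>x\<in>A. f x $$ (i, j)) = f y $$ (i, j)"
    using assms ij by (subst sum.remove[of A y]) (auto intro!: sum.neutral)
  then show "finsum_mat nr nc f A $$ (i, j) = f y $$ (i, j)" using ij by (simp add: finsum_mat_def)
qed (use assms in auto)

lemma finsum_mat_atMost_0: "(f :: nat \<Rightarrow> _) 0 \<in> carrier_mat nr nc \<Longrightarrow> finsum_mat nr nc f {..0} = f 0"
  by (rule finsum_mat_single) auto

lemma finsum_mat_atMost_Suc:
  "f (Suc k) \<in> carrier_mat nr nc \<Longrightarrow>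
   finsum_mat nr nc f {..Suc k} = f (Suc k) + finsum_mat nr nc f {..k}"
  by (simp add: atMost_Suc finsum_mat_insert)

lemma finsum_mat_lessThan_Suc:
  "f k \<in> carrier_mat nr nc \<Longrightarrow> finsum_mat nr nc f {..<Suc k} = f k + finsum_mat nr nc f {..<k}"
  by (simp add: lessThan_Suc finsum_mat_insert)

lemma finsum_mat_mult_pow_Suc:
  assumes F: "\<And>j. F j \<in> carrier_mat p n" and V: "V \<in> carrier_mat n n"
  shows "finsum_mat p n (\<lambda>j. F j * V ^\<^sub>m (i - j)) {..i} * V
    = finsum_mat p n (\<lambda>j. F j * V ^\<^sub>m (Suc i - j)) {..i}"
proof -
  have "finsum_mat p n (\<lambda>j. F j * V ^\<^sub>m (i - j)) {..i} * V
      = finsum_mat p n (\<lambda>j. F j * V ^\<^sub>m (i - j) * V) {..i}"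
    using F V by (intro finsum_mat_mult_right) (auto intro!: mult_carrier_mat)
  also have "\<dots> = finsum_mat p n (\<lambda>j. F j * V ^\<^sub>m (Suc i - j)) {..i}"
  proof (rule finsum_mat_cong)
    fix j assume "j \<in> {..i}"
    then have "Suc i - j = Suc (i - j)" by auto
    with F V show "F j * V ^\<^sub>m (i - j) * V = F j * V ^\<^sub>m (Suc i - j)"
      by (simp add: assoc_mult_mat[of _ p n _ n _ n])
  qed
  finally show ?thesis .
qed

lemma finsum_mat_convolution_zero:
  fixes f g :: "nat \<Rightarrow> 'a :: semiring_0 mat"
  assumes "\<And>j. j < m \<Longrightarrow> f j = 0\<^sub>m nr k" and "\<And>j. j < n \<Longrightarrow> g j = 0\<^sub>m k nc"
    and "\<And>j. f j \<in> carrier_mat nr k" and "\<And>j. g j \<in> carrier_mat k nc" and "i < n + m"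
  shows "finsum_mat nr nc (\<lambda>j. f j * g (i - j)) {..i} = 0\<^sub>m nr nc"
proof (rule finsum_mat_zero)
  fix j assume "j \<in> {..i}"
  then have "j < m \<or> i - j < n" using \<open>i < n + m\<close> by auto
  then show "f j * g (i - j) = 0\<^sub>m nr nc" using assms(1-4) by (metis left_mult_zero_mat right_mult_zero_mat)
qed

lemma finsum_mat_convolution_top:
  fixes f g :: "nat \<Rightarrow> 'a :: semiring_0 mat"
  assumes "\<And>j. j < m \<Longrightarrow> f j = 0\<^sub>m nr k" and "\<And>j. j < n \<Longrightarrow> g j = 0\<^sub>m k nc"
    and "\<And>j. f j \<in> carrier_mat nr k" and "\<And>j. g j \<in> carrier_mat k nc"
  shows "finsum_mat nr nc (\<lambda>j. f j * g (n + m - j)) {..n + m} = f m * g n"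
proof -
  have "finsum_mat nr nc (\<lambda>j. f j * g (n + m - j)) {..n + m} = f m * g (n + m - m)"
  proof (rule finsum_mat_single)
    fix j assume "j \<in> {..n + m}" "j \<noteq> m"
    then have "j < m \<or> n + m - j < n" by auto
    then show "f j * g (n + m - j) = 0\<^sub>m nr nc"
      using assms by (metis left_mult_zero_mat right_mult_zero_mat)
  qed (use assms(3,4) in \<open>auto intro: mult_carrier_mat\<close>)
  then show ?thesis by simp
qed

section \<open>Block identities of r-perfect S-complexes and their morphisms\<close>

text \<open>The (1,0), (2,0) and (1,2) blocks of \<open>d\<^sup>2 = 0\<close> for an r-perfect complex (where \<open>r = 0\<close>),
and the vanishing of the odd degree maps \<open>\<delta>1 v^i \<delta>2\<close> on \<open>R\<close>.\<close>

locale r_perfect_blocks =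
  fixes n r :: nat and d v \<delta>1 \<delta>2 :: "'a :: comm_ring_1 mat"
  assumes d_carrier: "d \<in> carrier_mat n n" and v_carrier: "v \<in> carrier_mat n n"
    and \<delta>1_carrier: "\<delta>1 \<in> carrier_mat r n" and \<delta>2_carrier: "\<delta>2 \<in> carrier_mat n r"
    and d_v: "d * v = v * d + \<delta>2 * \<delta>1"
    and \<delta>1_d: "\<delta>1 * d = 0\<^sub>m r n" and d_\<delta>2: "d * \<delta>2 = 0\<^sub>m n r"
    and \<delta>1_vpow_\<delta>2: "\<And>i. \<delta>1 * v ^\<^sub>m i * \<delta>2 = 0\<^sub>m r r"
begin

lemma dim_blocks[simp]:
  "dim_row d = n" "dim_col d = n" "dim_row v = n" "dim_col v = n"
  "dim_row \<delta>1 = r" "dim_col \<delta>1 = n" "dim_row \<delta>2 = n" "dim_col \<delta>2 = r"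
  using d_carrier v_carrier \<delta>1_carrier \<delta>2_carrier by auto

lemma \<delta>1_vpow_d: "\<delta>1 * v ^\<^sub>m i * d = 0\<^sub>m r n"
proof (induct i)
  case (Suc i)
  have "\<delta>1 * v ^\<^sub>m i * (d * v) = \<delta>1 * v ^\<^sub>m i * (v * d) + \<delta>1 * v ^\<^sub>m i * (\<delta>2 * \<delta>1)"
    by (simp add: d_v mult_add_distrib_mat_dim)
  moreover have "\<delta>1 * v ^\<^sub>m i * (d * v) = \<delta>1 * v ^\<^sub>m i * d * v"
    and "\<delta>1 * v ^\<^sub>m i * (\<delta>2 * \<delta>1) = \<delta>1 * v ^\<^sub>m i * \<delta>2 * \<delta>1"
    and "\<delta>1 * v ^\<^sub>m Suc i * d = \<delta>1 * v ^\<^sub>m i * (v * d)"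
    by (simp_all add: assoc_mult_mat_dim)
  ultimately show ?case using Suc \<delta>1_vpow_\<delta>2 by (simp add: right_add_zero_mat_dim)
qed (simp add: \<delta>1_d)

lemma \<delta>1_vpow_\<delta>2_assoc: "\<delta>1 * (v ^\<^sub>m i * \<delta>2) = 0\<^sub>m r r"
  using \<delta>1_vpow_\<delta>2[of i] by (simp add: assoc_mult_mat_dim)

lemma v_vpow_\<delta>2: "v * (v ^\<^sub>m i * \<delta>2) = v ^\<^sub>m Suc i * \<delta>2"
  using pow_mat_Suc_left[of v i] by (simp add: assoc_mult_mat_dim)

lemma d_vpow_\<delta>2: "d * (v ^\<^sub>m i * \<delta>2) = 0\<^sub>m n r"
proof (induct i)
  case (Suc i)
  have "d * (v ^\<^sub>m Suc i * \<delta>2) = d * v * (v ^\<^sub>m i * \<delta>2)"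
    by (simp only: v_vpow_\<delta>2[symmetric]) (simp add: assoc_mult_mat_dim)
  also have "\<dots> = v * (d * (v ^\<^sub>m i * \<delta>2)) + \<delta>2 * (\<delta>1 * (v ^\<^sub>m i * \<delta>2))"
    by (simp add: d_v add_mult_distrib_mat_dim assoc_mult_mat_dim)
  also have "\<dots> = 0\<^sub>m n r" using Suc \<delta>1_vpow_\<delta>2_assoc by (simp add: right_add_zero_mat_dim)
  finally show ?case .
qed (simp add: d_\<delta>2)

end

fun sigma_blk :: "'a :: comm_ring_1 mat \<Rightarrow> 'a mat \<Rightarrow> 'a mat \<Rightarrow> 'a mat \<Rightarrow> 'a mat \<Rightarrow> nat \<Rightarrow> 'a mat"
  where
  "sigma_blk \<delta>1' v' v \<mu> \<Delta>1 0 = \<Delta>1"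
| "sigma_blk \<delta>1' v' v \<mu> \<Delta>1 (Suc k) = sigma_blk \<delta>1' v' v \<mu> \<Delta>1 k * v + \<delta>1' * v' ^\<^sub>m k * \<mu>"

fun tau_blk :: "'a :: comm_ring_1 mat \<Rightarrow> 'a mat \<Rightarrow> 'a mat \<Rightarrow> 'a mat \<Rightarrow> 'a mat \<Rightarrow> 'a mat \<Rightarrow> 'a mat
    \<Rightarrow> 'a mat \<Rightarrow> nat \<Rightarrow> 'a mat"
  where
  "tau_blk \<delta>1' v' v \<delta>2 \<mu> \<Delta>1 \<Delta>2 \<rho> 0 = \<rho>"
| "tau_blk \<delta>1' v' v \<delta>2 \<mu> \<Delta>1 \<Delta>2 \<rho> (Suc k) =
     \<delta>1' * v' ^\<^sub>m k * \<Delta>2 + sigma_blk \<delta>1' v' v \<mu> \<Delta>1 k * \<delta>2"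

text \<open>The last three assumptions are the (2,0), (1,0) and (1,2) blocks of \<open>d' lam = lam d\<close>.\<close>

locale morphism_blocks =
  X: r_perfect_blocks n r d v \<delta>1 \<delta>2 + Y: r_perfect_blocks n' r' d' v' \<delta>1' \<delta>2'
  for n r :: nat and d v \<delta>1 \<delta>2 :: "'a :: comm_ring_1 mat"
    and n' r' :: nat and d' v' \<delta>1' \<delta>2' :: "'a mat" +
  fixes lam \<mu> \<Delta>1 \<Delta>2 \<rho> :: "'a mat"
  assumes lam_carrier: "lam \<in> carrier_mat n' n" and \<mu>_carrier: "\<mu> \<in> carrier_mat n' n"
    and \<Delta>1_carrier: "\<Delta>1 \<in> carrier_mat r' n" and \<Delta>2_carrier: "\<Delta>2 \<in> carrier_mat n' r"
    and \<rho>_carrier: "\<rho> \<in> carrier_mat r' r"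
    and \<delta>1'_lam: "\<delta>1' * lam = \<Delta>1 * d + \<rho> * \<delta>1"
    and v'_lam: "v' * lam + \<delta>2' * \<Delta>1 = \<mu> * d + lam * v + \<Delta>2 * \<delta>1 + d' * \<mu>"
    and lam_\<delta>2: "lam * \<delta>2 + d' * \<Delta>2 = \<delta>2' * \<rho>"
begin

lemma dim_morphism_blocks[simp]:
  "dim_row lam = n'" "dim_col lam = n" "dim_row \<mu> = n'" "dim_col \<mu> = n"
  "dim_row \<Delta>1 = r'" "dim_col \<Delta>1 = n" "dim_row \<Delta>2 = n'" "dim_col \<Delta>2 = r"
  "dim_row \<rho> = r'" "dim_col \<rho> = r"
  using lam_carrier \<mu>_carrier \<Delta>1_carrier \<Delta>2_carrier \<rho>_carrier by auto

abbreviation \<sigma> where "\<sigma> \<equiv> sigma_blk \<delta>1' v' v \<mu> \<Delta>1"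
abbreviation \<tau> where "\<tau> \<equiv> tau_blk \<delta>1' v' v \<delta>2 \<mu> \<Delta>1 \<Delta>2 \<rho>"

lemma dim_\<sigma>[simp]: "dim_row (\<sigma> k) = r'" "dim_col (\<sigma> k) = n"
  by (induct k) auto

lemma dim_\<tau>[simp]: "dim_row (\<tau> k) = r'" "dim_col (\<tau> k) = r"
  by (cases k; simp)+

lemma \<tau>_carrier[simp]: "\<tau> k \<in> carrier_mat r' r"
  by (auto intro: carrier_matI)

lemma \<delta>1'_vpow_lam:
  "\<delta>1' * v' ^\<^sub>m i * lam = finsum_mat r' n (\<lambda>j. \<tau> j * \<delta>1 * v ^\<^sub>m (i - j)) {..i} + \<sigma> i * d"
proof (induct i)
  case 0
  have "finsum_mat r' n (\<lambda>j. \<tau> j * \<delta>1 * v ^\<^sub>m (0 - j)) {..0} + \<sigma> 0 * d = \<rho> * \<delta>1 + \<Delta>1 * d"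
    by (subst finsum_mat_atMost_0) (auto intro: carrier_matI)
  then show ?case by (simp add: \<delta>1'_lam comm_add_mat_dim)
next
  case (Suc i)
  define a where "a = \<delta>1' * v' ^\<^sub>m i"
  define M where "M = finsum_mat r' n (\<lambda>j. \<tau> j * \<delta>1 * v ^\<^sub>m (Suc i - j)) {..i}"
  have [simp]: "dim_row a = r'" "dim_col a = n'" "dim_row M = r'" "dim_col M = n"
    by (auto simp: a_def M_def)
  have a_v'_lam: "a * (v' * lam) = a * \<mu> * d + a * lam * v + a * \<Delta>2 * \<delta>1"
  proof -
    have "a * \<delta>2' = 0\<^sub>m r' r'" and "a * d' = 0\<^sub>m r' n'"
      using Y.\<delta>1_vpow_\<delta>2 Y.\<delta>1_vpow_d by (simp_all add: a_def)
    moreover have "a * (v' * lam + \<delta>2' * \<Delta>1) = a * (v' * lam) + a * \<delta>2' * \<Delta>1"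
      and "a * (\<mu> * d + lam * v + \<Delta>2 * \<delta>1 + d' * \<mu>)
        = a * \<mu> * d + a * lam * v + a * \<Delta>2 * \<delta>1 + a * d' * \<mu>"
      by (simp_all add: mult_add_distrib_mat_dim assoc_mult_mat_dim)
    ultimately show ?thesis using v'_lam by (simp add: right_add_zero_mat_dim)
  qed
  have a_lam_v: "a * lam * v = M + \<sigma> i * (v * d) + \<sigma> i * (\<delta>2 * \<delta>1)"
  proof -
    have "a * lam * v = finsum_mat r' n (\<lambda>j. \<tau> j * \<delta>1 * v ^\<^sub>m (i - j)) {..i} * v + \<sigma> i * (d * v)"
      using Suc by (simp add: a_def add_mult_distrib_mat_dim assoc_mult_mat_dim)
    also have "finsum_mat r' n (\<lambda>j. \<tau> j * \<delta>1 * v ^\<^sub>m (i - j)) {..i} * v = M"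
      unfolding M_def by (rule finsum_mat_mult_pow_Suc) (auto intro: carrier_matI)
    finally show ?thesis by (simp add: X.d_v mult_add_distrib_mat_dim assoc_add_mat_dim)
  qed
  have "finsum_mat r' n (\<lambda>j. \<tau> j * \<delta>1 * v ^\<^sub>m (Suc i - j)) {..Suc i} + \<sigma> (Suc i) * d
     = (a * \<Delta>2 * \<delta>1 + \<sigma> i * \<delta>2 * \<delta>1 + M) + (\<sigma> i * v * d + a * \<mu> * d)"
    by (subst finsum_mat_atMost_Suc)
      (auto simp: M_def a_def add_mult_distrib_mat_dim intro!: carrier_matI)
  moreover have "\<delta>1' * v' ^\<^sub>m Suc i * lam = a * (v' * lam)"
    by (simp add: a_def assoc_mult_mat_dim)
  ultimately show ?case
    unfolding a_v'_lam a_lam_v by (intro eq_matI) (simp_all add: assoc_mult_mat_dim)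
qed

lemma \<delta>1'_vpow_lam_mult:
  assumes B: "B \<in> carrier_mat n c"
  shows "\<delta>1' * v' ^\<^sub>m i * (lam * B)
    = finsum_mat r' c (\<lambda>j. \<tau> j * (\<delta>1 * v ^\<^sub>m (i - j) * B)) {..i} + \<sigma> i * (d * B)"
proof -
  have "\<delta>1' * v' ^\<^sub>m i * (lam * B) = \<delta>1' * v' ^\<^sub>m i * lam * B"
    using B by (simp add: assoc_mult_mat_dim)
  also have "\<dots> = finsum_mat r' n (\<lambda>j. \<tau> j * \<delta>1 * v ^\<^sub>m (i - j)) {..i} * B + \<sigma> i * (d * B)"
    using B unfolding \<delta>1'_vpow_lam by (simp add: add_mult_distrib_mat_dim assoc_mult_mat_dim)
  also have "finsum_mat r' n (\<lambda>j. \<tau> j * \<delta>1 * v ^\<^sub>m (i - j)) {..i} * B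
    = finsum_mat r' c (\<lambda>j. \<tau> j * \<delta>1 * v ^\<^sub>m (i - j) * B) {..i}"
    using B by (intro finsum_mat_mult_right) (auto intro!: carrier_matI)
  also have "\<dots> = finsum_mat r' c (\<lambda>j. \<tau> j * (\<delta>1 * v ^\<^sub>m (i - j) * B)) {..i}"
    using B by (intro finsum_mat_cong) (simp add: assoc_mult_mat_dim)
  finally show ?thesis .
qed

lemma sigma_blk_mult:
  "B \<in> carrier_mat n c \<Longrightarrow> \<sigma> i * B
     = \<Delta>1 * v ^\<^sub>m i * B + finsum_mat r' c (\<lambda>j. \<delta>1' * v' ^\<^sub>m j * \<mu> * v ^\<^sub>m (i - 1 - j) * B) {..<i}"
proof (induct i arbitrary: B)
  case 0
  then show ?case by (simp add: right_add_zero_mat_dim)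
next
  case (Suc i)
  then have [simp]: "dim_row B = n" "dim_col B = c" and vB: "v * B \<in> carrier_mat n c" by auto
  define Q where "Q = finsum_mat r' c (\<lambda>j. \<delta>1' * v' ^\<^sub>m j * \<mu> * v ^\<^sub>m (Suc i - 1 - j) * B) {..<i}"
  have [simp]: "dim_row Q = r'" "dim_col Q = c" by (simp_all add: Q_def)
  have "finsum_mat r' c (\<lambda>j. \<delta>1' * v' ^\<^sub>m j * \<mu> * v ^\<^sub>m (i - 1 - j) * (v * B)) {..<i} = Q"
    unfolding Q_def
  proof (rule finsum_mat_cong)
    fix j assume "j \<in> {..<i}"
    then have "Suc i - 1 - j = Suc (i - 1 - j)" by auto
    then show "\<delta>1' * v' ^\<^sub>m j * \<mu> * v ^\<^sub>m (i - 1 - j) * (v * B)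
      = \<delta>1' * v' ^\<^sub>m j * \<mu> * v ^\<^sub>m (Suc i - 1 - j) * B"
      by (simp add: assoc_mult_mat_dim)
  qed
  then have "\<sigma> (Suc i) * B = \<Delta>1 * v ^\<^sub>m i * (v * B) + Q + \<delta>1' * v' ^\<^sub>m i * \<mu> * B"
    using Suc(1)[OF vB] by (simp add: add_mult_distrib_mat_dim assoc_mult_mat_dim)
  moreover have "\<Delta>1 * v ^\<^sub>m Suc i * B
      + finsum_mat r' c (\<lambda>j. \<delta>1' * v' ^\<^sub>m j * \<mu> * v ^\<^sub>m (Suc i - 1 - j) * B) {..<Suc i}
    = \<Delta>1 * v ^\<^sub>m i * (v * B) + (\<delta>1' * v' ^\<^sub>m i * \<mu> * B + Q)"
    by (subst finsum_mat_lessThan_Suc) (auto simp: Q_def assoc_mult_mat_dim intro!: carrier_matI)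
  ultimately show ?case by (intro eq_matI) (simp_all add: ac_simps)
qed

lemma convolution_\<sigma>_Suc:
  assumes F: "\<And>j. F j \<in> carrier_mat p r'" and B: "B \<in> carrier_mat n c"
  shows "finsum_mat p c (\<lambda>j. F j * (\<sigma> (Suc k - j) * B)) {..Suc k}
    = F (Suc k) * (\<Delta>1 * B) + (finsum_mat p c (\<lambda>j. F j * (\<sigma> (k - j) * (v * B))) {..k}
      + finsum_mat p c (\<lambda>j. F j * (\<delta>1' * v' ^\<^sub>m (k - j) * (\<mu> * B))) {..k})"
proof -
  have [simp]: "dim_row (F j) = p" "dim_col (F j) = r'" for j using F by auto
  have "finsum_mat p c (\<lambda>j. F j * (\<sigma> (Suc k - j) * B)) {..k}
    = finsum_mat p c (\<lambda>j. F j * (\<sigma> (k - j) * (v * B))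
        + F j * (\<delta>1' * v' ^\<^sub>m (k - j) * (\<mu> * B))) {..k}"
  proof (rule finsum_mat_cong)
    fix j assume "j \<in> {..k}"
    then have "Suc k - j = Suc (k - j)" by auto
    with B show "F j * (\<sigma> (Suc k - j) * B)
      = F j * (\<sigma> (k - j) * (v * B)) + F j * (\<delta>1' * v' ^\<^sub>m (k - j) * (\<mu> * B))"
      by (simp add: add_mult_distrib_mat_dim mult_add_distrib_mat_dim assoc_mult_mat_dim)
  qed
  also have "\<dots> = finsum_mat p c (\<lambda>j. F j * (\<sigma> (k - j) * (v * B))) {..k}
      + finsum_mat p c (\<lambda>j. F j * (\<delta>1' * v' ^\<^sub>m (k - j) * (\<mu> * B))) {..k}"
    using B by (intro finsum_mat_add) (auto intro!: carrier_matI)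
  finally show ?thesis
    using B by (subst finsum_mat_atMost_Suc) (auto intro!: carrier_matI)
qed

lemma convolution_\<tau>_Suc:
  assumes F: "\<And>j. F j \<in> carrier_mat p r'"
  shows "finsum_mat p r (\<lambda>j. F j * \<tau> (Suc k - j)) {..Suc k}
    = F (Suc k) * \<rho> + (finsum_mat p r (\<lambda>j. F j * (\<delta>1' * v' ^\<^sub>m (k - j) * \<Delta>2)) {..k}
      + finsum_mat p r (\<lambda>j. F j * (\<sigma> (k - j) * \<delta>2)) {..k})"
proof -
  have [simp]: "dim_row (F j) = p" "dim_col (F j) = r'" for j using F by auto
  have "finsum_mat p r (\<lambda>j. F j * \<tau> (Suc k - j)) {..k}
    = finsum_mat p r (\<lambda>j. F j * (\<delta>1' * v' ^\<^sub>m (k - j) * \<Delta>2) + F j * (\<sigma> (k - j) * \<delta>2)) {..k}"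
  proof (rule finsum_mat_cong)
    fix j assume "j \<in> {..k}"
    then have "Suc k - j = Suc (k - j)" by auto
    then show "F j * \<tau> (Suc k - j) = F j * (\<delta>1' * v' ^\<^sub>m (k - j) * \<Delta>2) + F j * (\<sigma> (k - j) * \<delta>2)"
      by (simp add: mult_add_distrib_mat_dim)
  qed
  also have "\<dots> = finsum_mat p r (\<lambda>j. F j * (\<delta>1' * v' ^\<^sub>m (k - j) * \<Delta>2)) {..k}
      + finsum_mat p r (\<lambda>j. F j * (\<sigma> (k - j) * \<delta>2)) {..k}"
    by (intro finsum_mat_add) (auto intro!: carrier_matI)
  finally show ?thesis by (subst finsum_mat_atMost_Suc) (auto intro!: carrier_matI)
qed

lemma tau_blk_Suc:
  "\<tau> (Suc i) = \<delta>1' * v' ^\<^sub>m i * \<Delta>2 + \<Delta>1 * v ^\<^sub>m i * \<delta>2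
     + finsum_mat r' r (\<lambda>j. \<delta>1' * v' ^\<^sub>m j * \<mu> * v ^\<^sub>m (i - 1 - j) * \<delta>2) {..<i}"
  using sigma_blk_mult[of \<delta>2 r i] X.\<delta>2_carrier by (simp add: assoc_add_mat_dim)

end

text \<open>\<open>\<mu>c, \<Delta>1c, \<Delta>2c\<close> and \<open>\<rho>' * \<rho>\<close> are the blocks of the composite, see \<open>mblk_comp\<close>.\<close>

locale morphism_blocks_comp =
  L: morphism_blocks n r d v \<delta>1 \<delta>2 n' r' d' v' \<delta>1' \<delta>2' lam \<mu> \<Delta>1 \<Delta>2 \<rho>
  + M: morphism_blocks n' r' d' v' \<delta>1' \<delta>2' n'' r'' d'' v'' \<delta>1'' \<delta>2'' lam' \<mu>' \<Delta>1' \<Delta>2' \<rho>'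
  for n r :: nat and d v \<delta>1 \<delta>2 :: "'a :: comm_ring_1 mat"
    and n' r' :: nat and d' v' \<delta>1' \<delta>2' :: "'a mat"
    and n'' r'' :: nat and d'' v'' \<delta>1'' \<delta>2'' :: "'a mat"
    and lam \<mu> \<Delta>1 \<Delta>2 \<rho> lam' \<mu>' \<Delta>1' \<Delta>2' \<rho>' :: "'a mat"
begin

abbreviation "\<mu>c \<equiv> \<mu>' * lam + lam' * \<mu> + \<Delta>2' * \<Delta>1"
abbreviation "\<Delta>1c \<equiv> \<Delta>1' * lam + \<rho>' * \<Delta>1"
abbreviation "\<Delta>2c \<equiv> lam' * \<Delta>2 + \<Delta>2' * \<rho>"
abbreviation "\<sigma>c \<equiv> sigma_blk \<delta>1'' v'' v \<mu>c \<Delta>1c"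
abbreviation "\<tau>c \<equiv> tau_blk \<delta>1'' v'' v \<delta>2 \<mu>c \<Delta>1c \<Delta>2c (\<rho>' * \<rho>)"

lemma dim_\<sigma>c[simp]: "dim_row (\<sigma>c k) = r''" "dim_col (\<sigma>c k) = n"
  by (induct k) auto

text \<open>On \<open>b = v^i \<delta>2\<close>, which is annihilated by \<open>d\<close> and \<open>\<delta>1\<close>, the composite \<open>\<sigma>c\<close> splits like
\<open>\<tau>\<close> into a convolution.\<close>

lemma \<sigma>c_vpow_\<delta>2:
  "\<sigma>c k * (v ^\<^sub>m i * \<delta>2)
    = finsum_mat r'' r (\<lambda>j. M.\<tau> j * (L.\<sigma> (k - j) * (v ^\<^sub>m i * \<delta>2))) {..k}
      + M.\<sigma> k * (lam * (v ^\<^sub>m i * \<delta>2))"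
proof (induct k arbitrary: i)
  case 0
  define b where "b = v ^\<^sub>m i * \<delta>2"
  have [simp]: "dim_row b = n" "dim_col b = r" by (auto simp: b_def)
  have "\<sigma>c 0 * b = \<Delta>1' * (lam * b) + \<rho>' * (\<Delta>1 * b)"
    by (simp add: add_mult_distrib_mat_dim assoc_mult_mat_dim)
  also have "\<dots> = finsum_mat r'' r (\<lambda>j. M.\<tau> j * (L.\<sigma> (0 - j) * b)) {..0} + M.\<sigma> 0 * (lam * b)"
    by (subst finsum_mat_atMost_0) (auto intro!: carrier_matI simp: add_mat_ac_dim)
  finally show ?case by (simp add: b_def)
next
  case (Suc k)
  define b where "b = v ^\<^sub>m i * \<delta>2"
  define b' where "b' = v ^\<^sub>m Suc i * \<delta>2"
  define a where "a = \<delta>1'' * v'' ^\<^sub>m k"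
  define MA where "MA = finsum_mat r'' r (\<lambda>j. M.\<tau> j * (\<delta>1' * v' ^\<^sub>m (k - j) * (\<mu> * b))) {..k}"
  define MB where "MB = finsum_mat r'' r (\<lambda>j. M.\<tau> j * (L.\<sigma> (k - j) * b')) {..k}"
  have [simp]: "dim_row b = n" "dim_col b = r" "dim_row b' = n" "dim_col b' = r"
    "dim_row a = r''" "dim_col a = n''" "dim_row MA = r''" "dim_col MA = r"
    "dim_row MB = r''" "dim_col MB = r"
    by (auto simp: b_def b'_def a_def MA_def MB_def)
  have v_b: "v * b = b'" unfolding b_def b'_def by (rule L.X.v_vpow_\<delta>2)
  have d_b: "d * b = 0\<^sub>m n r" unfolding b_def by (rule L.X.d_vpow_\<delta>2)
  have \<delta>1_b: "\<delta>1 * b = 0\<^sub>m r r" unfolding b_def by (rule L.X.\<delta>1_vpow_\<delta>2_assoc)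
  have IH: "\<sigma>c k * b' = MB + M.\<sigma> k * (lam * b')"
    using Suc[of "Suc i"] by (simp add: MB_def b'_def)
  have a_lam': "a * (lam' * (\<mu> * b)) = MA + M.\<sigma> k * (d' * (\<mu> * b))"
    unfolding a_def MA_def by (rule M.\<delta>1'_vpow_lam_mult) (auto intro!: carrier_matI)
  have v'_lam_b: "M.\<sigma> k * (lam * b') + M.\<sigma> k * (d' * (\<mu> * b))
      = M.\<sigma> k * (v' * (lam * b)) + M.\<sigma> k * (\<delta>2' * (\<Delta>1 * b))"
  proof -
    have "M.\<sigma> k * ((v' * lam + \<delta>2' * \<Delta>1) * b) = M.\<sigma> k * ((\<mu> * d + lam * v + \<Delta>2 * \<delta>1 + d' * \<mu>) * b)"
      using L.v'_lam by simp
    then show ?thesis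
      using d_b \<delta>1_b v_b
      by (simp add: add_mult_distrib_mat_dim mult_add_distrib_mat_dim assoc_mult_mat_dim
          left_add_zero_mat_dim right_add_zero_mat_dim)
  qed
  have sum_Suc: "finsum_mat r'' r (\<lambda>j. M.\<tau> j * (L.\<sigma> (Suc k - j) * b)) {..Suc k}
      = M.\<tau> (Suc k) * (\<Delta>1 * b) + (MB + MA)"
    unfolding MA_def MB_def v_b[symmetric] by (rule L.convolution_\<sigma>_Suc) (auto intro: carrier_matI)
  have "\<sigma>c (Suc k) * b
      = \<sigma>c k * b' + (a * (\<mu>' * (lam * b)) + a * (lam' * (\<mu> * b)) + a * (\<Delta>2' * (\<Delta>1 * b)))"
    by (simp add: a_def add_mult_distrib_mat_dim mult_add_distrib_mat_dim assoc_mult_mat_dim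
        v_b[symmetric])
  also have "\<dots> = MB + MA + a * (\<mu>' * (lam * b)) + a * (\<Delta>2' * (\<Delta>1 * b))
        + (M.\<sigma> k * (lam * b') + M.\<sigma> k * (d' * (\<mu> * b)))"
    unfolding IH a_lam' by (simp add: add_mat_ac_dim)
  also have "\<dots> = MB + MA + a * (\<mu>' * (lam * b)) + a * (\<Delta>2' * (\<Delta>1 * b))
        + (M.\<sigma> k * (v' * (lam * b)) + M.\<sigma> k * (\<delta>2' * (\<Delta>1 * b)))"
    unfolding v'_lam_b ..
  also have "\<dots> = finsum_mat r'' r (\<lambda>j. M.\<tau> j * (L.\<sigma> (Suc k - j) * b)) {..Suc k}
      + M.\<sigma> (Suc k) * (lam * b)"
    unfolding sum_Suc
    by (simp add: a_def add_mult_distrib_mat_dim assoc_mult_mat_dim add_mat_ac_dim)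
  finally show ?case by (simp add: b_def)
qed

lemma \<tau>c_convolution: "\<tau>c k = finsum_mat r'' r (\<lambda>j. M.\<tau> j * L.\<tau> (k - j)) {..k}"
proof (cases k)
  case 0
  show ?thesis unfolding 0 by (subst finsum_mat_atMost_0) (auto intro!: carrier_matI)
next
  case (Suc k)
  define a where "a = \<delta>1'' * v'' ^\<^sub>m k"
  define MA where "MA = finsum_mat r'' r (\<lambda>j. M.\<tau> j * (\<delta>1' * v' ^\<^sub>m (k - j) * \<Delta>2)) {..k}"
  define MB where "MB = finsum_mat r'' r (\<lambda>j. M.\<tau> j * (L.\<sigma> (k - j) * \<delta>2)) {..k}"
  have [simp]: "dim_row a = r''" "dim_col a = n''" "dim_row MA = r''" "dim_col MA = r"
    "dim_row MB = r''" "dim_col MB = r"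
    by (auto simp: a_def MA_def MB_def)
  have \<sigma>c_\<delta>2: "\<sigma>c k * \<delta>2 = MB + M.\<sigma> k * (lam * \<delta>2)"
    using \<sigma>c_vpow_\<delta>2[of k 0] by (simp add: MB_def)
  have a_lam': "a * (lam' * \<Delta>2) = MA + M.\<sigma> k * (d' * \<Delta>2)"
    unfolding a_def MA_def by (rule M.\<delta>1'_vpow_lam_mult) (auto intro!: carrier_matI)
  have \<sigma>_lam_\<delta>2: "M.\<sigma> k * (lam * \<delta>2) + M.\<sigma> k * (d' * \<Delta>2) = M.\<sigma> k * (\<delta>2' * \<rho>)"
    using arg_cong[OF L.lam_\<delta>2, of "\<lambda>X. M.\<sigma> k * X"] by (simp add: mult_add_distrib_mat_dim)
  have sum_Suc: "finsum_mat r'' r (\<lambda>j. M.\<tau> j * L.\<tau> (Suc k - j)) {..Suc k}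
      = M.\<tau> (Suc k) * \<rho> + (MA + MB)"
    unfolding MA_def MB_def by (rule L.convolution_\<tau>_Suc) simp
  have "\<tau>c (Suc k) = a * (lam' * \<Delta>2) + a * (\<Delta>2' * \<rho>) + \<sigma>c k * \<delta>2"
    by (simp add: a_def mult_add_distrib_mat_dim assoc_mult_mat_dim)
  also have "\<dots> = MA + MB + a * (\<Delta>2' * \<rho>) + (M.\<sigma> k * (lam * \<delta>2) + M.\<sigma> k * (d' * \<Delta>2))"
    unfolding a_lam' \<sigma>c_\<delta>2 by (simp add: add_mat_ac_dim)
  also have "\<dots> = MA + MB + a * (\<Delta>2' * \<rho>) + M.\<sigma> k * (\<delta>2' * \<rho>)"
    unfolding \<sigma>_lam_\<delta>2 ..
  also have "\<dots> = finsum_mat r'' r (\<lambda>j. M.\<tau> j * L.\<tau> (Suc k - j)) {..Suc k}"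
    unfolding sum_Suc
    by (simp add: a_def add_mult_distrib_mat_dim assoc_mult_mat_dim add_mat_ac_dim)
  finally show ?thesis unfolding Suc .
qed

end

section \<open>Graded maps\<close>

lemma graded_map_mult:
  assumes M: "graded_map k1 ds dt M" and N: "graded_map k2 dt du N"
  shows "graded_map (k1 + k2) ds du (N * M)"
  unfolding graded_map_def
proof (intro conjI allI impI)
  have Mc: "M \<in> carrier_mat (length dt) (length ds)" and Nc: "N \<in> carrier_mat (length du) (length dt)"
    using M N unfolding graded_map_def by auto
  then show "N * M \<in> carrier_mat (length du) (length ds)" by auto
  fix i j assume i: "i < length du" and j: "j < length ds" and nz: "(N * M) $$ (i, j) \<noteq> 0"
  have "(\<Sum>l<length dt. N $$ (i, l) * M $$ (l, j)) \<noteq> 0"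
    using nz i j Mc Nc by (simp add: scalar_prod_def atLeast0LessThan)
  then obtain l where l: "l < length dt" "N $$ (i, l) * M $$ (l, j) \<noteq> 0"
    by (meson lessThan_iff sum.neutral)
  then have "N $$ (i, l) \<noteq> 0" "M $$ (l, j) \<noteq> 0" by auto
  then have "du ! i = dt ! l + k2" "dt ! l = ds ! j + k1"
    using M N i j l(1) unfolding graded_map_def by blast+
  then show "du ! i = ds ! j + (k1 + k2)" by simp
qed

lemma graded_map_shift:
  assumes "graded_map k ds (map (\<lambda>d. d + 1) dt) M"
  shows "graded_map (k - 1) ds dt M"
  unfolding graded_map_def
proof (intro conjI allI impI)
  show "M \<in> carrier_mat (length dt) (length ds)" using assms unfolding graded_map_def by auto
  fix i j assume "i < length dt" "j < length ds" "M $$ (i, j) \<noteq> 0"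
  then have "map (\<lambda>d. d + 1) dt ! i = ds ! j + k" using assms unfolding graded_map_def by auto
  then show "dt ! i = ds ! j + (k - 1)" using \<open>i < length dt\<close> by simp
qed

lemma graded_map_pow:
  assumes "graded_map k ds ds (A :: 'a :: semiring_1 mat)"
  shows "graded_map (k * int i) ds ds (A ^\<^sub>m i)"
proof (induct i)
  case 0
  have "dim_row A = length ds" using assms unfolding graded_map_def by auto
  then show ?case by (simp add: graded_map_def)
next
  case (Suc i)
  have "graded_map (k + k * int i) ds ds (A ^\<^sub>m i * A)" by (rule graded_map_mult[OF assms Suc])
  then show ?case by (simp add: algebra_simps)
qed

lemma graded_map_odd_zero:
  assumes g: "graded_map k ds dt M" and "odd k" and "\<forall>e\<in>set ds. even e" and "\<forall>e\<in>set dt. even e"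
  shows "M = 0\<^sub>m (length dt) (length ds)"
proof (rule eq_matI)
  fix i j assume "i < dim_row (0\<^sub>m (length dt) (length ds) :: 'a mat)"
    and "j < dim_col (0\<^sub>m (length dt) (length ds) :: 'a mat)"
  then have i: "i < length dt" and j: "j < length ds" by auto
  have "even (dt ! i)" "even (ds ! j)" using assms i j by auto
  then have "dt ! i \<noteq> ds ! j + k" using \<open>odd k\<close> by auto
  then show "M $$ (i, j) = 0\<^sub>m (length dt) (length ds) $$ (i, j)"
    using g i j unfolding graded_map_def by auto
qed (use g in \<open>auto simp: graded_map_def\<close>)

section \<open>Blocks of the encoded complexes and morphisms\<close>

lemma length_totdeg[simp]: "length (totdeg X) = 2 * nC X + nR X"
  by (simp add: totdeg_def nC_def nR_def)

lemma bsize_boff_simps[simp]: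
  "bsize X 0 = nC X" "bsize X 1 = nC X" "bsize X (Suc 0) = nC X" "bsize X 2 = nR X"
  "boff X 0 = 0" "boff X 1 = nC X" "boff X (Suc 0) = nC X" "boff X 2 = 2 * nC X"
  by (simp_all add: bsize_def boff_def)

lemma dim_mblk[simp]: "dim_row (mblk Y X M a b) = bsize Y a" "dim_col (mblk Y X M a b) = bsize X b"
  by (simp_all add: mblk_def blk_def)

lemma index_mblk:
  "i < bsize Y a \<Longrightarrow> j < bsize X b \<Longrightarrow> mblk Y X M a b $$ (i, j) = M $$ (boff Y a + i, boff X b + j)"
  by (simp add: mblk_def blk_def)

lemma boff_bsize_le: "a < 3 \<Longrightarrow> boff X a + bsize X a \<le> 2 * nC X + nR X"
  by (auto simp: boff_def bsize_def)

lemma sum_lessThan_add_split: "(\<Sum>l < (p :: nat) + q. f l) = (\<Sum>l < p. f l) + (\<Sum>l < q. f (p + l))"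
  by (induct q) (auto simp: add_ac)

lemma mblk_mult:
  assumes A: "A \<in> carrier_mat (2 * nC Z + nR Z) (2 * nC Y + nR Y)"
    and B: "B \<in> carrier_mat (2 * nC Y + nR Y) (2 * nC X + nR X)" and ab: "a < 3" "b < 3"
  shows "mblk Z X (A * B) a b = mblk Z Y A a 0 * mblk Y X B 0 b + mblk Z Y A a 1 * mblk Y X B 1 b
     + mblk Z Y A a 2 * mblk Y X B 2 b"
proof (rule eq_matI)
  fix i j assume "i < dim_row (mblk Z Y A a 0 * mblk Y X B 0 b + mblk Z Y A a 1 * mblk Y X B 1 b
     + mblk Z Y A a 2 * mblk Y X B 2 b)"
    and "j < dim_col (mblk Z Y A a 0 * mblk Y X B 0 b + mblk Z Y A a 1 * mblk Y X B 1 b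
     + mblk Z Y A a 2 * mblk Y X B 2 b)"
  then have i: "i < bsize Z a" and j: "j < bsize X b" by (auto simp: bsize_def)
  have I: "boff Z a + i < 2 * nC Z + nR Z" using boff_bsize_le[OF ab(1), of Z] i by linarith
  have J: "boff X b + j < 2 * nC X + nR X" using boff_bsize_le[OF ab(2), of X] j by linarith
  let ?f = "\<lambda>l. A $$ (boff Z a + i, l) * B $$ (l, boff X b + j)"
  have "mblk Z X (A * B) a b $$ (i, j) = (\<Sum>l < 2 * nC Y + nR Y. ?f l)"
    using i j I J A B by (simp add: index_mblk scalar_prod_def atLeast0LessThan)
  also have "\<dots> = (\<Sum>l < nC Y. ?f l) + (\<Sum>l < nC Y. ?f (nC Y + l)) + (\<Sum>l < nR Y. ?f (2 * nC Y + l))"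
    using sum_lessThan_add_split[of ?f "2 * nC Y" "nR Y"] sum_lessThan_add_split[of ?f "nC Y" "nC Y"]
    by (simp add: mult_2)
  also have "\<dots> = (mblk Z Y A a 0 * mblk Y X B 0 b + mblk Z Y A a 1 * mblk Y X B 1 b
     + mblk Z Y A a 2 * mblk Y X B 2 b) $$ (i, j)"
    using i j by (simp add: index_mblk scalar_prod_def atLeast0LessThan bsize_def boff_def mult_2)
  finally show "mblk Z X (A * B) a b $$ (i, j) = (mblk Z Y A a 0 * mblk Y X B 0 b
     + mblk Z Y A a 1 * mblk Y X B 1 b + mblk Z Y A a 2 * mblk Y X B 2 b) $$ (i, j)" .
qed (auto simp: bsize_def)

lemma mblk_zero_mat:
  "a < 3 \<Longrightarrow> b < 3 \<Longrightarrow>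
   mblk Y X (0\<^sub>m (2 * nC Y + nR Y) (2 * nC X + nR X)) a b = 0\<^sub>m (bsize Y a) (bsize X b)"
  using boff_bsize_le[of a Y] boff_bsize_le[of b X] by (intro eq_matI) (auto simp: index_mblk)

definition bdeg :: "'a scx \<Rightarrow> nat \<Rightarrow> int list" where
  "bdeg X b = (if b = 0 then cdeg X else if b = 1 then map (\<lambda>d. d + 1) (cdeg X) else rdeg X)"

lemma bdeg_simps[simp]:
  "bdeg X 0 = cdeg X" "bdeg X 1 = map (\<lambda>d. d + 1) (cdeg X)"
  "bdeg X (Suc 0) = map (\<lambda>d. d + 1) (cdeg X)" "bdeg X 2 = rdeg X"
  by (simp_all add: bdeg_def)

lemma length_bdeg: "b < 3 \<Longrightarrow> length (bdeg X b) = bsize X b"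
  by (simp add: bdeg_def bsize_def nC_def nR_def)

lemma nth_totdeg: "b < 3 \<Longrightarrow> j < bsize X b \<Longrightarrow> totdeg X ! (boff X b + j) = bdeg X b ! j"
  by (auto simp: totdeg_def bdeg_def boff_def bsize_def nC_def nR_def nth_append mult_2)

lemma graded_map_mblk:
  assumes g: "graded_map k (totdeg X) (totdeg Y) M" and ab: "a < 3" "b < 3"
  shows "graded_map k (bdeg X b) (bdeg Y a) (mblk Y X M a b)"
  unfolding graded_map_def
proof (intro conjI allI impI)
  show "mblk Y X M a b \<in> carrier_mat (length (bdeg Y a)) (length (bdeg X b))"
    using ab by (intro carrier_matI) (simp_all add: length_bdeg)
next
  fix i j assume i: "i < length (bdeg Y a)" and j: "j < length (bdeg X b)"
    and nz: "mblk Y X M a b $$ (i, j) \<noteq> 0"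
  have I: "boff Y a + i < length (totdeg Y)"
    using boff_bsize_le[OF ab(1), of Y] i by (simp add: length_bdeg ab)
  have J: "boff X b + j < length (totdeg X)"
    using boff_bsize_le[OF ab(2), of X] j by (simp add: length_bdeg ab)
  have "M $$ (boff Y a + i, boff X b + j) \<noteq> 0" using nz i j by (simp add: index_mblk length_bdeg ab)
  then have "totdeg Y ! (boff Y a + i) = totdeg X ! (boff X b + j) + k"
    using g I J unfolding graded_map_def by blast
  then show "bdeg Y a ! i = bdeg X b ! j + k" using i j ab by (simp add: nth_totdeg length_bdeg)
qed

lemma dif_carrier: "S_complex X \<Longrightarrow> dif X \<in> carrier_mat (2 * nC X + nR X) (2 * nC X + nR X)"
  unfolding S_complex_def graded_map_def by auto

lemma S_complex_mblk:
  assumes "S_complex X"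
  shows "mblk X X (dif X) 0 1 = 0\<^sub>m (nC X) (nC X)" "mblk X X (dif X) 0 2 = 0\<^sub>m (nC X) (nR X)"
    "mblk X X (dif X) 2 1 = 0\<^sub>m (nR X) (nC X)" "mblk X X (dif X) 1 1 = - d_of X"
    "mblk X X (dif X) 0 (Suc 0) = 0\<^sub>m (nC X) (nC X)" "mblk X X (dif X) 2 (Suc 0) = 0\<^sub>m (nR X) (nC X)"
    "mblk X X (dif X) (Suc 0) (Suc 0) = - d_of X"
  using assms by (simp_all add: S_complex_def)

lemma mblk_dif_fold:
  "mblk X X (dif X) 0 0 = d_of X" "mblk X X (dif X) 1 0 = v_of X" "mblk X X (dif X) (Suc 0) 0 = v_of X"
  "mblk X X (dif X) 1 2 = delta2_of X" "mblk X X (dif X) (Suc 0) 2 = delta2_of X"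
  "mblk X X (dif X) 2 0 = delta1_of X"
  by (simp_all add: d_of_def v_of_def delta1_of_def delta2_of_def)

lemma dim_blocks_of[simp]:
  "dim_row (d_of X) = nC X" "dim_col (d_of X) = nC X"
  "dim_row (v_of X) = nC X" "dim_col (v_of X) = nC X"
  "dim_row (delta1_of X) = nR X" "dim_col (delta1_of X) = nC X"
  "dim_row (delta2_of X) = nC X" "dim_col (delta2_of X) = nR X"
  "dim_row (mu_of X Y L) = nC Y" "dim_col (mu_of X Y L) = nC X"
  "dim_row (Delta1_of X Y L) = nR Y" "dim_col (Delta1_of X Y L) = nC X"
  "dim_row (Delta2_of X Y L) = nC Y" "dim_col (Delta2_of X Y L) = nR X"
  "dim_row (rho_of X Y L) = nR Y" "dim_col (rho_of X Y L) = nR X"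
  by (simp_all add: d_of_def v_of_def delta1_of_def delta2_of_def mu_of_def Delta2_of_def
      Delta1_of_def rho_of_def)

lemma r_perfect_r_zero: "r_perfect X \<Longrightarrow> mblk X X (dif X) 2 2 = 0\<^sub>m (nR X) (nR X)"
  using graded_map_odd_zero[of "-1" "rdeg X" "rdeg X" "mblk X X (dif X) 2 2"]
    graded_map_mblk[of "-1" X X "dif X" 2 2]
  by (simp add: r_perfect_def S_complex_def nR_def)

lemma r_perfect_delta1_vpow_delta2:
  assumes "r_perfect X"
  shows "delta1_of X * v_of X ^\<^sub>m i * delta2_of X = 0\<^sub>m (nR X) (nR X)"
proof -
  have g: "graded_map (-1) (totdeg X) (totdeg X) (dif X)" and ev: "\<forall>e\<in>set (rdeg X). even e"
    using assms unfolding r_perfect_def S_complex_def by auto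
  have "graded_map (-1) (cdeg X) (map (\<lambda>d. d + 1) (cdeg X)) (v_of X)"
    using graded_map_mblk[OF g, of 1 0] by (simp add: v_of_def)
  then have v: "graded_map (-2) (cdeg X) (cdeg X) (v_of X)" using graded_map_shift by fastforce
  have \<delta>1: "graded_map (-1) (cdeg X) (rdeg X) (delta1_of X)"
    using graded_map_mblk[OF g, of 2 0] by (simp add: delta1_of_def)
  have "graded_map (-1) (rdeg X) (map (\<lambda>d. d + 1) (cdeg X)) (delta2_of X)"
    using graded_map_mblk[OF g, of 1 2] by (simp add: delta2_of_def)
  then have \<delta>2: "graded_map (-2) (rdeg X) (cdeg X) (delta2_of X)" using graded_map_shift by fastforce
  have "graded_map (-2 + (-2 * int i + -1)) (rdeg X) (rdeg X) (delta1_of X * v_of X ^\<^sub>m i * delta2_of X)"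
    by (rule graded_map_mult[OF \<delta>2 graded_map_mult[OF graded_map_pow[OF v] \<delta>1]])
  from graded_map_odd_zero[OF this _ ev ev] show ?thesis by (simp add: nR_def)
qed

lemma r_perfect_blocks_of:
  assumes rp: "r_perfect X"
  shows "r_perfect_blocks (nC X) (nR X) (d_of X) (v_of X) (delta1_of X) (delta2_of X)"
proof -
  have Sc: "S_complex X" using rp by (simp add: r_perfect_def)
  have D: "dif X \<in> carrier_mat (2 * nC X + nR X) (2 * nC X + nR X)" by (rule dif_carrier[OF Sc])
  have "dif X * dif X = 0\<^sub>m (2 * nC X + nR X) (2 * nC X + nR X)" using Sc by (simp add: S_complex_def)
  then have square_zero: "\<And>a b. a < 3 \<Longrightarrow> b < 3 \<Longrightarrow>
      mblk X X (dif X) a 0 * mblk X X (dif X) 0 b + mblk X X (dif X) a 1 * mblk X X (dif X) 1 b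
      + mblk X X (dif X) a 2 * mblk X X (dif X) 2 b = 0\<^sub>m (bsize X a) (bsize X b)"
    using mblk_mult[OF D D] mblk_zero_mat[of _ _ X X] by metis
  note blocks = S_complex_mblk[OF Sc] r_perfect_r_zero[OF rp]
  have block_1_0: "v_of X * d_of X + - d_of X * v_of X + delta2_of X * delta1_of X = 0\<^sub>m (nC X) (nC X)"
    using square_zero[of 1 0] blocks by (simp add: mblk_dif_fold)
  have block_1_2: "- d_of X * delta2_of X = 0\<^sub>m (nC X) (nR X)"
    using square_zero[of 1 2] blocks
    by (simp add: mblk_dif_fold left_add_zero_mat_dim right_add_zero_mat_dim)
  show ?thesis
  proof
    show "delta1_of X * d_of X = 0\<^sub>m (nR X) (nC X)"
      using square_zero[of 2 0] blocks by (simp add: mblk_dif_fold right_add_zero_mat_dim)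
    show "d_of X * delta2_of X = 0\<^sub>m (nC X) (nR X)" using block_1_2 by (auto simp: mat_eq_iff)
    show "d_of X * v_of X = v_of X * d_of X + delta2_of X * delta1_of X"
      using block_1_0 by (auto simp: mat_eq_iff algebra_simps)
  qed (auto intro: carrier_matI r_perfect_delta1_vpow_delta2[OF rp])
qed

lemma S_morphism_carrier:
  "S_morphism k X Y L \<Longrightarrow> L \<in> carrier_mat (2 * nC Y + nR Y) (2 * nC X + nR X)"
  by (simp add: S_morphism_def graded_map_def)

lemma S_morphism_mblk:
  assumes "S_morphism k X Y L"
  shows "mblk Y X L 0 1 = 0\<^sub>m (nC Y) (nC X)" "mblk Y X L 0 2 = 0\<^sub>m (nC Y) (nR X)"
    "mblk Y X L 2 1 = 0\<^sub>m (nR Y) (nC X)" "mblk Y X L 1 1 = mblk Y X L 0 0"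
    "mblk Y X L 0 (Suc 0) = 0\<^sub>m (nC Y) (nC X)" "mblk Y X L 2 (Suc 0) = 0\<^sub>m (nR Y) (nC X)"
    "mblk Y X L (Suc 0) (Suc 0) = mblk Y X L 0 0"
  using assms by (simp_all add: S_morphism_def)

lemma mblk_morphism_fold:
  "mblk Y X L 1 0 = mu_of X Y L" "mblk Y X L (Suc 0) 0 = mu_of X Y L"
  "mblk Y X L 1 2 = Delta2_of X Y L" "mblk Y X L (Suc 0) 2 = Delta2_of X Y L"
  "mblk Y X L 2 0 = Delta1_of X Y L" "mblk Y X L 2 2 = rho_of X Y L"
  by (simp_all add: mu_of_def Delta2_of_def Delta1_of_def rho_of_def)

lemma morphism_blocks_of:
  assumes sm: "S_morphism k X Y L" and rpX: "r_perfect X" and rpY: "r_perfect Y"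
  shows "morphism_blocks (nC X) (nR X) (d_of X) (v_of X) (delta1_of X) (delta2_of X)
     (nC Y) (nR Y) (d_of Y) (v_of Y) (delta1_of Y) (delta2_of Y)
     (mblk Y X L 0 0) (mu_of X Y L) (Delta1_of X Y L) (Delta2_of X Y L) (rho_of X Y L)"
proof -
  have ScX: "S_complex X" and ScY: "S_complex Y" using sm by (simp_all add: S_morphism_def)
  have "dif Y * L = L * dif X" using sm by (simp add: S_morphism_def)
  then have chain: "\<And>a b. a < 3 \<Longrightarrow> b < 3 \<Longrightarrow>
      mblk Y Y (dif Y) a 0 * mblk Y X L 0 b + mblk Y Y (dif Y) a 1 * mblk Y X L 1 b
      + mblk Y Y (dif Y) a 2 * mblk Y X L 2 b
    = mblk Y X L a 0 * mblk X X (dif X) 0 b + mblk Y X L a 1 * mblk X X (dif X) 1 b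
      + mblk Y X L a 2 * mblk X X (dif X) 2 b"
    using mblk_mult[OF dif_carrier[OF ScY] S_morphism_carrier[OF sm]]
      mblk_mult[OF S_morphism_carrier[OF sm] dif_carrier[OF ScX]] by metis
  note blocks = S_complex_mblk[OF ScX] S_complex_mblk[OF ScY] S_morphism_mblk[OF sm]
    r_perfect_r_zero[OF rpX] r_perfect_r_zero[OF rpY]
  have block_2_0: "delta1_of Y * mblk Y X L 0 0 = Delta1_of X Y L * d_of X + rho_of X Y L * delta1_of X"
    using chain[of 2 0] blocks by (simp add: mblk_dif_fold mblk_morphism_fold[of Y X L] right_add_zero_mat_dim)
  have block_1_0: "v_of Y * mblk Y X L 0 0 + - d_of Y * mu_of X Y L + delta2_of Y * Delta1_of X Y L
     = mu_of X Y L * d_of X + mblk Y X L 0 0 * v_of X + Delta2_of X Y L * delta1_of X"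
    using chain[of 1 0] blocks by (simp add: mblk_dif_fold mblk_morphism_fold[of Y X L])
  have block_1_2: "- d_of Y * Delta2_of X Y L + delta2_of Y * rho_of X Y L = mblk Y X L 0 0 * delta2_of X"
    using chain[of 1 2] blocks by (simp add: mblk_dif_fold mblk_morphism_fold[of Y X L] left_add_zero_mat_dim right_add_zero_mat_dim)
  show ?thesis
  proof (intro morphism_blocks.intro morphism_blocks_axioms.intro r_perfect_blocks_of rpX rpY block_2_0)
    show "v_of Y * mblk Y X L 0 0 + delta2_of Y * Delta1_of X Y L =
      mu_of X Y L * d_of X + mblk Y X L 0 0 * v_of X + Delta2_of X Y L * delta1_of X + d_of Y * mu_of X Y L"
      using block_1_0 by (auto simp: mat_eq_iff algebra_simps)
    show "mblk Y X L 0 0 * delta2_of X + d_of Y * Delta2_of X Y L = delta2_of Y * rho_of X Y L"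
      using block_1_2 by (auto simp: mat_eq_iff algebra_simps)
  qed (auto intro: carrier_matI)
qed

lemma mblk_comp:
  assumes L: "S_morphism k X Y L" and L': "S_morphism k' Y Z L'"
  shows "mblk Z X (L' * L) 0 0 = mblk Z Y L' 0 0 * mblk Y X L 0 0"
    "mblk Z X (L' * L) 1 1 = mblk Z X (L' * L) 0 0"
    "mblk Z X (L' * L) 0 1 = 0\<^sub>m (nC Z) (nC X)"
    "mblk Z X (L' * L) 0 2 = 0\<^sub>m (nC Z) (nR X)"
    "mblk Z X (L' * L) 2 1 = 0\<^sub>m (nR Z) (nC X)"
    "mu_of X Z (L' * L) = mu_of Y Z L' * mblk Y X L 0 0 + mblk Z Y L' 0 0 * mu_of X Y L
       + Delta2_of Y Z L' * Delta1_of X Y L"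
    "Delta1_of X Z (L' * L) = Delta1_of Y Z L' * mblk Y X L 0 0 + rho_of Y Z L' * Delta1_of X Y L"
    "Delta2_of X Z (L' * L) = mblk Z Y L' 0 0 * Delta2_of X Y L + Delta2_of Y Z L' * rho_of X Y L"
    "rho_of X Z (L' * L) = rho_of Y Z L' * rho_of X Y L"
proof -
  note prod = mblk_mult[OF S_morphism_carrier[OF L'] S_morphism_carrier[OF L]]
  note blocks = S_morphism_mblk[OF L] S_morphism_mblk[OF L']
  show "mblk Z X (L' * L) 0 0 = mblk Z Y L' 0 0 * mblk Y X L 0 0"
    using prod[of 0 0] blocks by (simp add: right_add_zero_mat_dim)
  show "mblk Z X (L' * L) 1 1 = mblk Z X (L' * L) 0 0"
    using prod[of 0 0] prod[of 1 1] blocks by (simp add: left_add_zero_mat_dim right_add_zero_mat_dim)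
  show "mblk Z X (L' * L) 0 1 = 0\<^sub>m (nC Z) (nC X)" "mblk Z X (L' * L) 0 2 = 0\<^sub>m (nC Z) (nR X)"
    "mblk Z X (L' * L) 2 1 = 0\<^sub>m (nR Z) (nC X)"
    using prod[of 0 1] prod[of 0 2] prod[of 2 1] blocks
    by (simp_all add: left_add_zero_mat_dim right_add_zero_mat_dim)
  show "mu_of X Z (L' * L) = mu_of Y Z L' * mblk Y X L 0 0 + mblk Z Y L' 0 0 * mu_of X Y L
      + Delta2_of Y Z L' * Delta1_of X Y L"
    using prod[of 1 0] blocks by (simp add: mu_of_def Delta2_of_def Delta1_of_def)
  show "Delta1_of X Z (L' * L) = Delta1_of Y Z L' * mblk Y X L 0 0 + rho_of Y Z L' * Delta1_of X Y L"
    using prod[of 2 0] blocks by (simp add: rho_of_def Delta1_of_def right_add_zero_mat_dim)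
  show "Delta2_of X Z (L' * L) = mblk Z Y L' 0 0 * Delta2_of X Y L + Delta2_of Y Z L' * rho_of X Y L"
    using prod[of 1 2] blocks by (simp add: rho_of_def Delta2_of_def left_add_zero_mat_dim)
  show "rho_of X Z (L' * L) = rho_of Y Z L' * rho_of X Y L"
    using prod[of 2 2] blocks by (simp add: rho_of_def left_add_zero_mat_dim)
qed

lemma S_morphism_comp:
  assumes L: "S_morphism k X Y L" and L': "S_morphism k' Y Z L'"
  shows "S_morphism (k + k') X Z (L' * L)"
proof -
  have ScX: "S_complex X" and ScY: "S_complex Y" and ScZ: "S_complex Z"
    using L L' by (simp_all add: S_morphism_def)
  note carriers = S_morphism_carrier[OF L] S_morphism_carrier[OF L']
    dif_carrier[OF ScX] dif_carrier[OF ScY] dif_carrier[OF ScZ]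
  have "graded_map (k + k') (totdeg X) (totdeg Z) (L' * L)"
    using L L' graded_map_mult[of k "totdeg X" "totdeg Y" L k' "totdeg Z" L'] by (simp add: S_morphism_def)
  moreover have "dif Z * (L' * L) = L' * L * dif X"
  proof -
    have "dif Z * (L' * L) = dif Z * L' * L" using carriers by simp
    also have "\<dots> = L' * (dif Y * L)" using L' carriers by (simp add: S_morphism_def)
    also have "\<dots> = L' * L * dif X" using L carriers by (simp add: S_morphism_def)
    finally show ?thesis .
  qed
  ultimately show ?thesis unfolding S_morphism_def using ScX ScZ mblk_comp[OF L L'] by simp
qed

lemma tau_eq_tau_blk:
  assumes "S_morphism k X Y L" and "r_perfect X" and "r_perfect Y"
  shows "tau i X Y L = tau_blk (delta1_of Y) (v_of Y) (v_of X) (delta2_of X)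
    (mu_of X Y L) (Delta1_of X Y L) (Delta2_of X Y L) (rho_of X Y L) i"
proof -
  interpret morphism_blocks "nC X" "nR X" "d_of X" "v_of X" "delta1_of X" "delta2_of X"
    "nC Y" "nR Y" "d_of Y" "v_of Y" "delta1_of Y" "delta2_of Y"
    "mblk Y X L 0 0" "mu_of X Y L" "Delta1_of X Y L" "Delta2_of X Y L" "rho_of X Y L"
    by (rule morphism_blocks_of[OF assms])
  show ?thesis
  proof (cases i)
    case (Suc j)
    show ?thesis unfolding Suc tau_blk_Suc by (simp add: finsum_mat_def)
  qed simp
qed

lemma tau_carrier:
  assumes "S_morphism k X Y L" and "r_perfect X" and "r_perfect Y"
  shows "tau i X Y L \<in> carrier_mat (nR Y) (nR X)"
proof -
  interpret morphism_blocks "nC X" "nR X" "d_of X" "v_of X" "delta1_of X" "delta2_of X"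
    "nC Y" "nR Y" "d_of Y" "v_of Y" "delta1_of Y" "delta2_of Y"
    "mblk Y X L 0 0" "mu_of X Y L" "Delta1_of X Y L" "Delta2_of X Y L" "rho_of X Y L"
    by (rule morphism_blocks_of[OF assms])
  show ?thesis unfolding tau_eq_tau_blk[OF assms] by (rule \<tau>_carrier)
qed

lemma tau_comp:
  assumes L: "S_morphism k X Y L" and L': "S_morphism k' Y Z L'"
    and rpX: "r_perfect X" and rpY: "r_perfect Y" and rpZ: "r_perfect Z"
  shows "tau i X Z (L' * L) = finsum_mat (nR Z) (nR X) (\<lambda>j. tau j Y Z L' * tau (i - j) X Y L) {..i}"
proof -
  interpret morphism_blocks_comp "nC X" "nR X" "d_of X" "v_of X" "delta1_of X" "delta2_of X"
    "nC Y" "nR Y" "d_of Y" "v_of Y" "delta1_of Y" "delta2_of Y"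
    "nC Z" "nR Z" "d_of Z" "v_of Z" "delta1_of Z" "delta2_of Z"
    "mblk Y X L 0 0" "mu_of X Y L" "Delta1_of X Y L" "Delta2_of X Y L" "rho_of X Y L"
    "mblk Z Y L' 0 0" "mu_of Y Z L'" "Delta1_of Y Z L'" "Delta2_of Y Z L'" "rho_of Y Z L'"
    using morphism_blocks_of[OF L rpX rpY] morphism_blocks_of[OF L' rpY rpZ]
    by (rule morphism_blocks_comp.intro)
  have "tau i X Z (L' * L) = \<tau>c i"
    unfolding tau_eq_tau_blk[OF S_morphism_comp[OF L L'] rpX rpZ] mblk_comp[OF L L'] ..
  also have "\<dots> = finsum_mat (nR Z) (nR X) (\<lambda>j. M.\<tau> j * L.\<tau> (i - j)) {..i}"
    by (rule \<tau>c_convolution)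
  finally show ?thesis unfolding tau_eq_tau_blk[OF L rpX rpY] tau_eq_tau_blk[OF L' rpY rpZ] .
qed

lemma iso_mat_mult:
  assumes A: "A \<in> carrier_mat p q" and B: "B \<in> carrier_mat q s" and "iso_mat A" and "iso_mat B"
  shows "iso_mat (A * B)"
proof -
  obtain A' where A': "A' \<in> carrier_mat q p" "A * A' = 1\<^sub>m p" "A' * A = 1\<^sub>m q"
    using \<open>iso_mat A\<close> A unfolding iso_mat_def by auto
  obtain B' where B': "B' \<in> carrier_mat s q" "B * B' = 1\<^sub>m q" "B' * B = 1\<^sub>m s"
    using \<open>iso_mat B\<close> B unfolding iso_mat_def by auto
  have BA: "B' * A' \<in> carrier_mat s p" and AB: "A * B \<in> carrier_mat p s" using A B A' B' by auto
  have "A * B * (B' * A') = A * (B * B' * A')"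
    using A B A' B' by (simp add: assoc_mult_mat[OF A B BA] assoc_mult_mat[symmetric, OF B B'(1) A'(1)])
  then have right: "A * B * (B' * A') = 1\<^sub>m p" using A'(1,2) B'(2) by simp
  have "B' * A' * (A * B) = B' * (A' * A * B)"
    using A B A' B' by (simp add: assoc_mult_mat[OF B'(1) A'(1) AB] assoc_mult_mat[symmetric, OF A'(1) A B])
  then have left: "B' * A' * (A * B) = 1\<^sub>m s" using A'(3) B B'(3) by simp
  show ?thesis unfolding iso_mat_def using A B BA right left by auto
qed

theorem lemma2p15:
  fixes X Y Z :: "'a :: comm_ring_1 scx"
    and L L' :: "'a mat"
    and n m :: nat
  assumes "r_perfect X" and "r_perfect Y" and "r_perfect Z"
    and "height_mor n X Y L"
    and "height_mor m Y Z L'"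
  shows "height_mor (n + m) X Z (L' * L) \<and>
         (strong_height_mor n X Y L \<and> strong_height_mor m Y Z L'
            \<longrightarrow> strong_height_mor (n + m) X Z (L' * L))"
proof -
  obtain k where k: "even k" "S_morphism k X Y L"
    and vanish: "\<And>j. j < n \<Longrightarrow> tau j X Y L = 0\<^sub>m (nR Y) (nR X)"
    using assms(4) unfolding height_mor_def by auto
  obtain k' where k': "even k'" "S_morphism k' Y Z L'"
    and vanish': "\<And>j. j < m \<Longrightarrow> tau j Y Z L' = 0\<^sub>m (nR Z) (nR Y)"
    using assms(5) unfolding height_mor_def by auto
  have carrier': "\<And>j. tau j Y Z L' \<in> carrier_mat (nR Z) (nR Y)"
    by (rule tau_carrier[OF k'(2) assms(2,3)])
  have carrier: "\<And>j. tau j X Y L \<in> carrier_mat (nR Y) (nR X)"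
    by (rule tau_carrier[OF k(2) assms(1,2)])
  note conv = tau_comp[OF k(2) k'(2) assms(1-3)]
  have "height_mor (n + m) X Z (L' * L)"
    unfolding height_mor_def
  proof (intro conjI allI impI assms(1,3) exI[of _ "k + k'"])
    show "even (k + k')" using k(1) k'(1) by simp
    show "S_morphism (k + k') X Z (L' * L)" by (rule S_morphism_comp[OF k(2) k'(2)])
    show "tau i X Z (L' * L) = 0\<^sub>m (nR Z) (nR X)" if "i < n + m" for i
      unfolding conv by (rule finsum_mat_convolution_zero[OF vanish' vanish carrier' carrier that])
  qed
  moreover have "tau (n + m) X Z (L' * L) = tau m Y Z L' * tau n X Y L"
    unfolding conv by (rule finsum_mat_convolution_top[OF vanish' vanish carrier' carrier])
  ultimately show ?thesis
    using iso_mat_mult[OF carrier' carrier] unfolding strong_height_mor_def by auto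
qed

end
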